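(* If $f:[-1,1]\to\mathbb{R}$ is $5$-convex, then \[ \int_{-1}^1 f(x)\,dx\;\le\;\tfrac{2}{5}\cdot\tfrac13\bigl(f(-1)+4f(0)+f(1)\bigr)+\tfrac35\Bigl(f\bigl(-\tfrac{\sqrt3}{3}\bigr)+f\bigl(\tfrac{\sqrt3}{3}\bigr)\Bigr)\;\le\;\tfrac16\bigl(f(-1)+f(1)\bigr)+\tfrac56\Bigl(f\bigl(-\tfrac{\sqrt5}{5}\bigr)+f\bigl(\tfrac{\sqrt5}{5}\bigr)\Bigr). \]
   Context: Divided differences are defined recursively by $[x_1;f]:=f(x_1)$ and $[x_1,\dots,x_{m+1};f]:=\frac{[x_2,\dots,x_{m+1};f]-[x_1,\dots,x_m;f]}{x_{m+1}-x_1}$ for pairwise distinct points. For $m\in\mathbb{N}$, a function $f$ on an interval $I$ is called $m$-convex if $[x_1,\dots,x_{m+2};f]\ge 0$ for all pairwise distinct $x_1,\dots,x_{m+2}\in I$. Integrals are Riemann integrals (an $m$-convex function on a compact interval is Riemann integrable). *)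

theory Defs
  imports "HOL-Analysis.Analysis"
begin

fun divdiff :: "real list \<Rightarrow> (real \<Rightarrow> real) \<Rightarrow> real" where
  "divdiff [] f = 0"
| "divdiff [x] f = f x"
| "divdiff (x # y # xs) f =
     (divdiff (y # xs) f - divdiff (butlast (x # y # xs)) f) / (last (y # xs) - x)"

definition m_convex_on :: "nat \<Rightarrow> real set \<Rightarrow> (real \<Rightarrow> real) \<Rightarrow> bool" where
  "m_convex_on m I f \<longleftrightarrow>
     (\<forall>xs. length xs = m + 2 \<and> distinct xs \<and> set xs \<subseteq> I \<longrightarrow> divdiff xs f \<ge> 0)"

end

theory Submission
  imports Defs
begin

text \<open>Write \<open>a = \<surd>3/3\<close> and \<open>Q\<close> for the middle rule, which is exact for polynomials of degree
at most 5. Interpolating \<open>f\<close> at the nodes \<open>N = {0, \<plusminus>1/2, \<plusminus>a}\<close> gives \<open>f = P + V G\<close> off \<open>N\<close>,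
with \<open>P\<close> the interpolant, \<open>V(x) = \<Prod>\<^sub>w\<^sub>\<in>\<^sub>N (x - w) = x\<^sup>5 - 7x\<^sup>3/12 + x/12\<close> and
\<open>G(x) = [x, N; f]\<close>. As \<open>G(y) - G(x) = (y - x) [x, y, N; f]\<close>, 5-convexity makes \<open>G\<close> nondecreasing,
so by Bonnet's second mean value theorem \<open>\<integral> V G = G(-1) \<integral>\<^sub>-\<^sub>1\<^sup>c V + G(1) \<integral>\<^sub>c\<^sup>1 V\<close> for some \<open>c\<close>.
Since \<open>f = P\<close> at \<open>0, \<plusminus>a\<close>, this yields \<open>Q f - \<integral> f = (G(1) - G(-1)) (W(c) + 1/240)\<close> with
\<open>W(x) = x\<^sup>6/6 - 7x\<^sup>4/48 + x\<^sup>2/24 \<ge> 0\<close> the primitive of \<open>V\<close> vanishing at 0.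
The second inequality holds because the difference of the two rules is \<open>8/225\<close> times the
divided difference of \<open>f\<close> at the seven nodes \<open>0, \<plusminus>\<surd>5/5, \<plusminus>a, \<plusminus>1\<close>.\<close>

definition divided_diff :: "real set \<Rightarrow> (real \<Rightarrow> real) \<Rightarrow> real" where
  "divided_diff S f = (\<Sum>u\<in>S. f u / (\<Prod>w\<in>S - {u}. u - w))"

lemma prod_diff_nonzero: "finite T \<Longrightarrow> u \<notin> T \<Longrightarrow> (\<Prod>w\<in>T. u - w) \<noteq> (0::real)"
  by (simp add: prod_zero_iff)

lemma divided_diff_insert:
  assumes "finite S" "x \<notin> S"
  shows "divided_diff (insert x S) f = f x / (\<Prod>w\<in>S. x - w) + divided_diff S (\<lambda>u. f u / (u - x))"
proof -
  have "(\<Prod>w\<in>insert x S - {u}. u - w) = (u - x) * (\<Prod>w\<in>S - {u}. u - w)" if "u \<in> S" for u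
  proof -
    have "insert x S - {u} = insert x (S - {u})" using that assms by auto
    then show ?thesis using assms by simp
  qed
  moreover have "insert x S - {x} = S" using assms by auto
  ultimately show ?thesis unfolding divided_diff_def using assms by (simp add: divide_divide_eq_left)
qed

lemma divided_diff_insert_insert:
  assumes "finite T" "x \<notin> T" "z \<notin> T" "x \<noteq> z"
  shows "divided_diff (insert z T) f - divided_diff (insert x T) f
    = (z - x) * divided_diff (insert x (insert z T)) f"
proof -
  have split: "divided_diff T (\<lambda>u. f u / (u - z)) - divided_diff T (\<lambda>u. f u / (u - x))
      = (z - x) * divided_diff T (\<lambda>u. f u / (u - x) / (u - z))"
    unfolding divided_diff_def sum_distrib_left sum_subtractf[symmetric]
  proof (rule sum.cong)
    fix u assume "u \<in> T"
    then have "u \<noteq> x" "u \<noteq> z" using assms by auto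
    then show "f u / (u - z) / p - f u / (u - x) / p = (z - x) * (f u / (u - x) / (u - z) / p)"
      for p by (simp add: divide_simps) (simp add: algebra_simps)
  qed simp
  have "(\<Prod>w\<in>T. x - w) \<noteq> 0" "(\<Prod>w\<in>T. z - w) \<noteq> 0"
    using assms by (auto intro: prod_diff_nonzero)
  then have "f z / (\<Prod>w\<in>T. z - w) - f x / (\<Prod>w\<in>T. x - w)
      = (z - x) * (f x / ((x - z) * (\<Prod>w\<in>T. x - w)) + f z / (z - x) / (\<Prod>w\<in>T. z - w))"
    using assms(4) by (simp add: divide_simps) (simp add: algebra_simps)
  with split show ?thesis
    using assms by (simp add: divided_diff_insert algebra_simps)
qed

lemma divdiff_eq_divided_diff:
  "distinct xs \<Longrightarrow> xs \<noteq> [] \<Longrightarrow> divdiff xs f = divided_diff (set xs) f"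
proof (induction xs f rule: divdiff.induct)
  case (1 f)
  then show ?case by simp
next
  case (2 x f)
  then show ?case by (simp add: divided_diff_def)
next
  case (3 x y xs f)
  define z where "z = last (y # xs)"
  define T where "T = set (y # xs) - {z}"
  have snoc: "butlast (x # y # xs) @ [z] = x # y # xs"
    unfolding z_def by (metis append_butlast_last_id last.simps list.distinct(1))
  then have "distinct (butlast (x # y # xs) @ [z])" using "3.prems"(1) by simp
  then have distinct_butlast: "distinct (butlast (x # y # xs))" "z \<notin> set (butlast (x # y # xs))"
    by simp_all
  have "z \<in> set (y # xs)" unfolding z_def by simp
  then have sets: "set (y # xs) = insert z T" "set (x # y # xs) = insert x (insert z T)"
    and "x \<notin> T" "x \<noteq> z" "finite T" "z \<notin> T"
    using "3.prems"(1) unfolding T_def by auto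
  moreover have "set (butlast (x # y # xs)) = insert x T"
  proof -
    have "insert z (set (butlast (x # y # xs))) = insert z (insert x T)"
      using arg_cong[OF snoc, of set] sets(2) by (simp add: insert_commute)
    then show ?thesis
      using insert_ident distinct_butlast(2) \<open>z \<notin> T\<close> \<open>x \<noteq> z\<close> by (metis insertE)
  qed
  ultimately have "divdiff (x # y # xs) f
      = (divided_diff (insert z T) f - divided_diff (insert x T) f) / (z - x)"
    using "3.IH" "3.prems"(1) distinct_butlast(1) by (simp add: z_def)
  also have "\<dots> = divided_diff (set (x # y # xs)) f"
    using divided_diff_insert_insert[of T x z f] sets(2) \<open>x \<notin> T\<close> \<open>x \<noteq> z\<close> \<open>finite T\<close> \<open>z \<notin> T\<close>
    by simp
  finally show ?case .
qed

lemma m_convex_on_divided_diff_nonneg: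
  assumes "m_convex_on m I f" "finite S" "card S = m + 2" "S \<subseteq> I"
  shows "0 \<le> divided_diff S f"
proof -
  define xs where "xs = sorted_list_of_set S"
  have xs: "distinct xs" "set xs = S" "length xs = m + 2"
    using assms(2,3) unfolding xs_def by auto
  then have "divdiff xs f = divided_diff S f"
    by (metis divdiff_eq_divided_diff list.size(3) add_2_eq_Suc' nat.distinct(1))
  with xs assms(1,4) show ?thesis
    unfolding m_convex_on_def by metis
qed

lemma m_convex_on_mono_divided_diff:
  assumes "m_convex_on m I f" "finite N" "card N = m" "N \<subseteq> I"
  shows "mono_on (I - N) (\<lambda>x. divided_diff (insert x N) f)"
proof (rule mono_onI)
  fix x y assume xy: "x \<in> I - N" "y \<in> I - N" "x \<le> y"
  show "divided_diff (insert x N) f \<le> divided_diff (insert y N) f"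
  proof (cases "x = y")
    case False
    then have "0 \<le> divided_diff (insert x (insert y N)) f"
      using xy assms by (intro m_convex_on_divided_diff_nonneg[OF assms(1)]) auto
    then have "0 \<le> (y - x) * divided_diff (insert x (insert y N)) f"
      using xy(3) by simp
    moreover have "divided_diff (insert y N) f - divided_diff (insert x N) f
        = (y - x) * divided_diff (insert x (insert y N)) f"
      using xy False assms(2) by (intro divided_diff_insert_insert) auto
    ultimately show ?thesis by linarith
  qed simp
qed

definition lagrange_interp :: "real set \<Rightarrow> (real \<Rightarrow> real) \<Rightarrow> real \<Rightarrow> real" where
  "lagrange_interp N f x = (\<Sum>u\<in>N. f u / (\<Prod>w\<in>N - {u}. u - w) * (\<Prod>w\<in>N - {u}. x - w))"

lemma lagrange_interp_node:
  assumes "finite N" "u \<in> N"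
  shows "lagrange_interp N f u = f u"
proof -
  have "(\<Sum>v\<in>N - {u}. f v / (\<Prod>w\<in>N - {v}. v - w) * (\<Prod>w\<in>N - {v}. u - w)) = 0"
    using assms by (intro sum.neutral) (auto simp: prod_zero_iff)
  moreover have "(\<Prod>w\<in>N - {u}. u - w) \<noteq> 0"
    using assms by (intro prod_diff_nonzero) auto
  ultimately show ?thesis
    unfolding lagrange_interp_def using assms by (simp add: sum.remove)
qed

lemma lagrange_remainder:
  assumes "finite N" "x \<notin> N"
  shows "f x = lagrange_interp N f x + (\<Prod>w\<in>N. x - w) * divided_diff (insert x N) f"
proof -
  have "(\<Prod>w\<in>N. x - w) * (f u / (u - x) / (\<Prod>w\<in>N - {u}. u - w))
      = - (f u / (\<Prod>w\<in>N - {u}. u - w) * (\<Prod>w\<in>N - {u}. x - w))" if "u \<in> N" for u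
  proof -
    have "(\<Prod>w\<in>N. x - w) = - ((u - x) * (\<Prod>w\<in>N - {u}. x - w))"
      using assms that by (simp add: prod.remove) (simp add: algebra_simps)
    moreover have "u \<noteq> x" using assms that by auto
    ultimately show ?thesis by (simp add: divide_simps)
  qed
  then have "(\<Prod>w\<in>N. x - w) * divided_diff N (\<lambda>u. f u / (u - x)) = - lagrange_interp N f x"
    unfolding divided_diff_def lagrange_interp_def by (simp add: sum_distrib_left sum_negf)
  moreover have "(\<Prod>w\<in>N. x - w) \<noteq> 0"
    using assms by (rule prod_diff_nonzero)
  ultimately show ?thesis
    using assms by (simp add: divided_diff_insert distrib_left)
qed

text \<open>The divided difference \<open>[x, N; f]\<close> is only monotone in \<open>x\<close> off the nodes \<open>N\<close>; the
second mean value theorem needs a function that is monotone on the whole interval.\<close>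

definition sup_extension :: "real \<Rightarrow> real set \<Rightarrow> (real \<Rightarrow> real) \<Rightarrow> real \<Rightarrow> real" where
  "sup_extension a N g x = Sup (g ` ({a..x} - N))"

lemma sup_extension_eq:
  assumes "mono_on ({a..b} - N) g" "x \<in> {a..b} - N"
  shows "sup_extension a N g x = g x"
  unfolding sup_extension_def
proof (rule cSup_eq_maximum)
  show "g x \<in> g ` ({a..x} - N)"
    using assms(2) by auto
  show "y \<le> g x" if "y \<in> g ` ({a..x} - N)" for y
    using that assms by (auto intro: monotone_onD[OF assms(1)])
qed

lemma mono_on_sup_extension:
  assumes "mono_on ({a..b} - N) g" "a \<notin> N" "b \<notin> N"
  shows "mono_on {a..b} (sup_extension a N g)"
proof (rule mono_onI)
  fix x y assume xy: "x \<in> {a..b}" "y \<in> {a..b}" "x \<le> y"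
  show "sup_extension a N g x \<le> sup_extension a N g y"
    unfolding sup_extension_def
  proof (rule cSup_subset_mono)
    show "g ` ({a..x} - N) \<noteq> {}"
      using xy assms(2) by auto
    show "bdd_above (g ` ({a..y} - N))"
      using xy assms by (intro bdd_aboveI2[of _ _ "g b"]) (auto intro: monotone_onD[OF assms(1)])
    show "g ` ({a..x} - N) \<subseteq> g ` ({a..y} - N)"
      using xy by auto
  qed
qed

definition simpson_gauss_rule :: "real \<Rightarrow> (real \<Rightarrow> real) \<Rightarrow> real" where
  "simpson_gauss_rule a g = 2/5 * (1/3 * (g (-1) + 4 * g 0 + g 1)) + 3/5 * (g (-a) + g a)"

definition simpson_gauss_exact :: "real \<Rightarrow> (real \<Rightarrow> real) \<Rightarrow> bool" where
  "simpson_gauss_exact a g \<longleftrightarrow> (g has_integral simpson_gauss_rule a g) {-1..1}"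

lemma has_integral_power:
  assumes "a \<le> b"
  shows "((\<lambda>x::real. x ^ j) has_integral ((b ^ Suc j - a ^ Suc j) / Suc j)) {a..b}"
proof -
  have "((\<lambda>x. x ^ j) has_integral (b ^ Suc j / Suc j - a ^ Suc j / Suc j)) {a..b}"
  proof (rule fundamental_theorem_of_calculus[OF assms])
    fix x :: real
    have "((\<lambda>x. x ^ Suc j / Suc j) has_real_derivative x ^ j) (at x)"
      by (intro derivative_eq_intros) (auto simp del: of_nat_Suc)
    then show "((\<lambda>x. x ^ Suc j / Suc j) has_vector_derivative x ^ j) (at x within {a..b})"
      using has_real_derivative_iff_has_vector_derivative has_vector_derivative_at_within by blast
  qed
  then show ?thesis by (simp add: diff_divide_distrib)
qed

lemma simpson_gauss_exact_power:
  assumes "a\<^sup>2 = 1/3" "j \<le> 5"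
  shows "simpson_gauss_exact a (\<lambda>x. x ^ j)"
proof -
  have "a ^ 3 = a * a\<^sup>2" "a ^ 4 = (a\<^sup>2)\<^sup>2" "a ^ 5 = a * (a\<^sup>2)\<^sup>2"
    by algebra+
  then have "a ^ 3 = a / 3" "a ^ 4 = 1/9" "a ^ 5 = a / 9"
    unfolding assms(1) by (simp_all add: power_divide)
  moreover have "j \<in> {0, 1, 2, 3, 4, 5}"
    using assms(2) by auto
  ultimately have "simpson_gauss_rule a (\<lambda>x. x ^ j) = (1 ^ Suc j - (-1) ^ Suc j) / Suc j"
    using assms(1) unfolding simpson_gauss_rule_def by (auto simp: power_minus_odd)
  then show ?thesis
    using has_integral_power[of "-1" 1 j] unfolding simpson_gauss_exact_def by simp
qed

lemma simpson_gauss_exact_add: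
  assumes "simpson_gauss_exact a g" "simpson_gauss_exact a h"
  shows "simpson_gauss_exact a (\<lambda>x. g x + h x)"
proof -
  have rule: "simpson_gauss_rule a (\<lambda>x. g x + h x) = simpson_gauss_rule a g + simpson_gauss_rule a h"
    unfolding simpson_gauss_rule_def by (simp add: ring_distribs)
  from assms show ?thesis
    unfolding simpson_gauss_exact_def rule by (rule has_integral_add)
qed

lemma simpson_gauss_exact_cmult:
  assumes "simpson_gauss_exact a g"
  shows "simpson_gauss_exact a (\<lambda>x. c * g x)"
proof -
  have rule: "simpson_gauss_rule a (\<lambda>x. c * g x) = c * simpson_gauss_rule a g"
    unfolding simpson_gauss_rule_def by (simp add: algebra_simps)
  from assms show ?thesis
    unfolding simpson_gauss_exact_def rule by (rule has_integral_mult_right)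
qed

lemma simpson_gauss_exact_sum:
  "finite A \<Longrightarrow> (\<And>i. i \<in> A \<Longrightarrow> simpson_gauss_exact a (g i))
    \<Longrightarrow> simpson_gauss_exact a (\<lambda>x. \<Sum>i\<in>A. g i x)"
proof (induction A rule: finite_induct)
  case empty
  then show ?case by (simp add: simpson_gauss_exact_def simpson_gauss_rule_def)
next
  case (insert i A)
  then show ?case by (simp add: simpson_gauss_exact_add)
qed

lemma simpson_gauss_exact_prod:
  assumes "a\<^sup>2 = 1/3" "finite M" "card M + j \<le> 5"
  shows "simpson_gauss_exact a (\<lambda>x. x ^ j * (\<Prod>m\<in>M. x - m))"
  using assms(2,3)
proof (induction M arbitrary: j rule: finite_induct)
  case empty
  then show ?case using simpson_gauss_exact_power[OF assms(1)] by simp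
next
  case (insert m M)
  have "simpson_gauss_exact a (\<lambda>x. x ^ Suc j * (\<Prod>m\<in>M. x - m) + (- m) * (x ^ j * (\<Prod>m\<in>M. x - m)))"
    using insert by (intro simpson_gauss_exact_add simpson_gauss_exact_cmult insert.IH) simp_all
  moreover have "x ^ Suc j * (\<Prod>m\<in>M. x - m) + (- m) * (x ^ j * (\<Prod>m\<in>M. x - m))
      = x ^ j * (\<Prod>m\<in>insert m M. x - m)" for x
    using insert.hyps by (simp add: algebra_simps)
  ultimately show ?case by simp
qed

lemma simpson_gauss_exact_lagrange_interp:
  assumes "a\<^sup>2 = 1/3" "finite N" "card N \<le> 5"
  shows "simpson_gauss_exact a (lagrange_interp N f)"
proof -
  have "simpson_gauss_exact a
      (\<lambda>x. \<Sum>u\<in>N. f u / (\<Prod>w\<in>N - {u}. u - w) * (x ^ 0 * (\<Prod>w\<in>N - {u}. x - w)))"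
  proof (intro simpson_gauss_exact_sum simpson_gauss_exact_cmult simpson_gauss_exact_prod)
    show "card (N - {u}) + 0 \<le> 5" for u
      using assms(3) card_Diff1_le[of N u] by simp
  qed (use assms in auto)
  then show ?thesis
    unfolding lagrange_interp_def by simp
qed

lemma prod_interpolation_nodes:
  fixes a x :: real
  assumes "a\<^sup>2 = 1/3" "1/2 < a"
  shows "(\<Prod>w\<in>{-a, -1/2, 0, 1/2, a}. x - w) = x ^ 5 - 7/12 * x ^ 3 + x / 12"
proof -
  have "(\<Prod>w\<in>{-a, -1/2, 0, 1/2, a}. x - w) = (x + a) * ((x + 1/2) * (x * ((x - 1/2) * (x - a))))"
    using assms(2) by auto
  also have "\<dots> = x ^ 5 - 7/12 * x ^ 3 + x / 12"
    using assms(1) by algebra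
  finally show ?thesis .
qed

lemma integral_interpolation_node_poly:
  fixes p q :: real
  assumes "p \<le> q"
  shows "integral {p..q} (\<lambda>x. x ^ 5 - 7/12 * x ^ 3 + x / 12)
    = (q ^ 6 / 6 - 7/48 * q ^ 4 + q\<^sup>2 / 24) - (p ^ 6 / 6 - 7/48 * p ^ 4 + p\<^sup>2 / 24)"
proof (rule integral_unique, rule fundamental_theorem_of_calculus[OF assms])
  fix x :: real
  have "((\<lambda>x. x ^ 6 / 6 - 7/48 * x ^ 4 + x\<^sup>2 / 24) has_real_derivative x ^ 5 - 7/12 * x ^ 3 + x / 12) (at x)"
    by (rule derivative_eq_intros refl | simp)+
  then show "((\<lambda>x. x ^ 6 / 6 - 7/48 * x ^ 4 + x\<^sup>2 / 24) has_vector_derivative x ^ 5 - 7/12 * x ^ 3 + x / 12)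
      (at x within {p..q})"
    using has_real_derivative_iff_has_vector_derivative has_vector_derivative_at_within by blast
qed

lemma sextic_nonneg:
  fixes x :: real
  shows "0 \<le> x ^ 6 / 6 - 7/48 * x ^ 4 + x\<^sup>2 / 24"
proof -
  have "x ^ 6 / 6 - 7/48 * x ^ 4 + x\<^sup>2 / 24 = x\<^sup>2 * (8 * (x\<^sup>2 - 7/16)\<^sup>2 + 15/32) / 48"
    by (simp add: power2_eq_square power_def field_simps)
  also have "\<dots> \<ge> 0"
    by simp
  finally show ?thesis .
qed

lemma integral_le_simpson_gauss_rule:
  assumes f: "m_convex_on 5 {-1..1} f" and a: "a\<^sup>2 = 1/3" "1/2 < a" "a < 1"
  shows "integral {-1..1} f \<le> simpson_gauss_rule a f"
proof -
  define N where "N = {-a, -1/2, 0, 1/2, a}"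
  define V where "V x = x ^ 5 - 7/12 * x ^ 3 + x / 12" for x :: real
  define W where "W x = x ^ 6 / 6 - 7/48 * x ^ 4 + x\<^sup>2 / 24" for x :: real
  define G where "G x = divided_diff (insert x N) f" for x
  define P where "P = lagrange_interp N f"
  have N: "finite N" "card N = 5" "N \<subseteq> {-1..1}" "-1 \<notin> N" "1 \<notin> N"
    using a unfolding N_def by auto
  have remainder: "f x = P x + V x * G x" if "x \<notin> N" for x
    using lagrange_remainder[OF N(1) that] prod_interpolation_nodes[OF a(1,2)]
    unfolding P_def V_def G_def N_def by simp
  have G_mono: "mono_on ({-1..1} - N) G"
    unfolding G_def using m_convex_on_mono_divided_diff[OF f N(1-3)] .
  have V_integrable: "V integrable_on {-1..1}"
    unfolding V_def by (intro integrable_continuous_interval continuous_intros) auto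
  have extension_mono: "sup_extension (-1) N G x \<le> sup_extension (-1) N G y"
    if "-1 \<le> x" "x \<le> y" "y \<le> 1" for x y
    using monotone_onD[OF mono_on_sup_extension[OF G_mono N(4,5)]] that by auto
  obtain c where c: "c \<in> {-1..1}" and integral_VG:
    "((\<lambda>x. sup_extension (-1) N G x * V x) has_integral
      (sup_extension (-1) N G (-1) * integral {-1..c} V + sup_extension (-1) N G 1 * integral {c..1} V))
      {-1..1}"
    by (rule second_mean_value_theorem_full[OF V_integrable _ extension_mono]) auto
  have "(P has_integral simpson_gauss_rule a P) {-1..1}"
    using simpson_gauss_exact_lagrange_interp[OF a(1) N(1)] N(2)
    unfolding P_def simpson_gauss_exact_def by simp
  then have "(f has_integral simpson_gauss_rule a P
      + (sup_extension (-1) N G (-1) * integral {-1..c} V + sup_extension (-1) N G 1 * integral {c..1} V))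
      {-1..1}"
    using remainder sup_extension_eq[OF G_mono]
    by (intro has_integral_spike_finite[OF N(1) _ has_integral_add[OF _ integral_VG]]) auto
  moreover have "sup_extension (-1) N G (-1) = G (-1)" "sup_extension (-1) N G 1 = G 1"
    using sup_extension_eq[OF G_mono] N(4,5) by auto
  moreover have "integral {-1..c} V = W c - 1/16" "integral {c..1} V = 1/16 - W c"
    using c integral_interpolation_node_poly[of "-1" c] integral_interpolation_node_poly[of c 1]
    unfolding V_def W_def by auto
  ultimately have integral_f: "integral {-1..1} f
      = simpson_gauss_rule a P + (G (-1) * (W c - 1/16) + G 1 * (1/16 - W c))"
    by (simp add: integral_unique)
  have rule_f: "simpson_gauss_rule a f = simpson_gauss_rule a P + (G 1 - G (-1)) / 15"
  proof -
    have "f 0 = P 0" "f a = P a" "f (-a) = P (-a)"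
      using lagrange_interp_node[OF N(1)] unfolding P_def N_def by auto
    moreover have "f (-1) = P (-1) - G (-1) / 2" "f 1 = P 1 + G 1 / 2"
      using remainder N(4,5) unfolding V_def by simp_all
    ultimately show ?thesis
      unfolding simpson_gauss_rule_def by (simp add: field_simps)
  qed
  have "simpson_gauss_rule a f - integral {-1..1} f = (G 1 - G (-1)) * (1/240 + W c)"
    unfolding integral_f rule_f by (simp add: field_simps)
  moreover have "0 \<le> (G 1 - G (-1)) * (1/240 + W c)"
    using monotone_onD[OF G_mono] N(4,5) sextic_nonneg[of c] unfolding W_def by simp
  ultimately show ?thesis
    by linarith
qed

lemma divided_diff_seven_nodes:
  fixes a b :: real
  assumes a2: "a\<^sup>2 = 1/3" and b2: "b\<^sup>2 = 1/5" and "0 < b" "b < a" "a < 1"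
  shows "divided_diff {-1, -a, -b, 0, b, a, 1} f
    = 15/16 * (f (-1) + f 1) - 15 * f 0 - 135/8 * (f (-a) + f a) + 375/16 * (f (-b) + f b)"
proof -
  txt \<open>The denominators \<open>\<Prod>\<^sub>w\<^sub>\<noteq>\<^sub>u (u - w)\<close>, in the form in which the simplifier produces them.\<close>
  have nodes: "(1 - a) * ((b - a) * (a * ((- a - b) * (2 * a * (- a - 1))))) = -8/135"
    "(a + 1) * (2 * a * ((a + b) * (a * ((a - b) * (a - 1))))) = -8/135"
    "(1 - b) * ((a - b) * (b * (2 * b * ((- b - a) * (- b - 1))))) = 16/375"
    "(b + 1) * ((b + a) * (2 * b * (b * ((b - a) * (b - 1))))) = 16/375"
    "2 * ((1 + a) * ((1 + b) * ((1 - b) * (1 - a)))) = 16/15"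
    "(a - 1) * ((b - 1) * ((- 1 - b) * (a * 2 + 2))) = -16/15"
    "a * (b * (b * a)) = 1/15"
    using a2 b2 by algebra+
  show ?thesis
    using assms unfolding divided_diff_def
    by (simp add: insert_Diff_if) (simp only: nodes, simp add: field_simps)
qed

lemma simpson_gauss_rule_le_lobatto_rule:
  assumes f: "m_convex_on 5 {-1..1} f"
    and ab: "a\<^sup>2 = 1/3" "b\<^sup>2 = 1/5" "0 < b" "b < a" "a < 1"
  shows "simpson_gauss_rule a f \<le> 1/6 * (f (-1) + f 1) + 5/6 * (f (-b) + f b)"
proof -
  have "0 \<le> divided_diff {-1, -a, -b, 0, b, a, 1} f"
    using ab by (intro m_convex_on_divided_diff_nonneg[OF f]) auto
  then show ?thesis
    unfolding divided_diff_seven_nodes[OF ab] simpson_gauss_rule_def by (simp add: field_simps)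
qed

theorem proposition4:
  fixes f :: "real \<Rightarrow> real"
  assumes "m_convex_on 5 {-1..1} f"
  shows "integral {-1..1} f
           \<le> 2/5 * (1/3 * (f (-1) + 4 * f 0 + f 1))
             + 3/5 * (f (- (sqrt 3 / 3)) + f (sqrt 3 / 3))
         \<and> 2/5 * (1/3 * (f (-1) + 4 * f 0 + f 1))
             + 3/5 * (f (- (sqrt 3 / 3)) + f (sqrt 3 / 3))
           \<le> 1/6 * (f (-1) + f 1) + 5/6 * (f (- (sqrt 5 / 5)) + f (sqrt 5 / 5))"
proof -
  have a: "(sqrt 3 / 3)\<^sup>2 = (1/3 :: real)" "1/2 < sqrt 3 / (3 :: real)" "sqrt 3 / 3 < (1 :: real)"
    and b: "(sqrt 5 / 5)\<^sup>2 = (1/5 :: real)" "0 < sqrt 5 / (5 :: real)" "sqrt 5 / 5 < sqrt 3 / (3 :: real)"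
    by (simp_all add: power_divide)
      (rule power_less_imp_less_base[of _ 2], simp_all add: power_divide)+
  show ?thesis
    using integral_le_simpson_gauss_rule[OF assms a]
      simpson_gauss_rule_le_lobatto_rule[OF assms a(1) b(1-3) a(3)]
    unfolding simpson_gauss_rule_def by simp
qed

end
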